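(* Let $Q \ll P$ be probability measures on a Polish space $\Omega$ with $r = dQ/dP$, and let $\epsilon \in (0,1]$. Let $Q'$ be any probability distribution on $\Omega$ such that $D_{TV}(Q', Q) \le \epsilon$. Then $\exp_2 D_\infty(Q'\|P) \ge S_P^{-1}(\epsilon)$.
   Context: Define $w_P(h) = \mathbb{P}_{X\sim P}[r(X) \ge h]$, $W_P(h) = \int_0^h w_P(\eta)\,d\eta$ and $S_P(h) = 1 - W_P(h)$. $S_P$ is strictly decreasing on $[0, \|r\|_\infty]$ with $S_P(0) = 1$, $S_P(\|r\|_\infty) = 0$, and $S_P^{-1} : [0,1] \to [0, \|r\|_\infty]$ denotes its inverse there ($\|\cdot\|_\infty$ is the $P$-essential supremum). $D_\infty(Q'\|P) = \log_2 \|dQ'/dP\|_\infty$ if $Q' \ll P$ and $+\infty$ otherwise; $\exp_2(x) = 2^x$. $D_{TV}(Q',Q) = \sup_B |Q'(B) - Q(B)|$. *)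

theory Defs
  imports "HOL-Probability.Probability"
begin

definition rdens :: "'a measure \<Rightarrow> 'a measure \<Rightarrow> 'a \<Rightarrow> real" where
  "rdens P Q = (\<lambda>x. enn2real (RN_deriv P Q x))"

definition wP :: "'a measure \<Rightarrow> ('a \<Rightarrow> real) \<Rightarrow> real \<Rightarrow> real" where
  "wP P r h = measure P {x \<in> space P. r x \<ge> h}"

definition WP :: "'a measure \<Rightarrow> ('a \<Rightarrow> real) \<Rightarrow> real \<Rightarrow> real" where
  "WP P r h = (LBINT \<eta>=0..h. wP P r \<eta>)"

definition SP :: "'a measure \<Rightarrow> ('a \<Rightarrow> real) \<Rightarrow> real \<Rightarrow> real" where
  "SP P r h = 1 - WP P r h"

definition rsup :: "'a measure \<Rightarrow> ('a \<Rightarrow> real) \<Rightarrow> ereal" where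
  "rsup P r = esssup P (\<lambda>x. ereal (r x))"

definition SP_inv :: "'a measure \<Rightarrow> ('a \<Rightarrow> real) \<Rightarrow> real \<Rightarrow> real" where
  "SP_inv P r e = (THE h. 0 \<le> h \<and> ereal h \<le> rsup P r \<and> SP P r h = e)"

definition Dinf :: "'a measure \<Rightarrow> 'a measure \<Rightarrow> ereal" where
  "Dinf Q' P = (if absolutely_continuous P Q' then
      (case esssup P (\<lambda>x. enn2ereal (RN_deriv P Q' x)) of
         ereal t \<Rightarrow> ereal (log 2 t) | PInfty \<Rightarrow> \<infinity> | MInfty \<Rightarrow> -\<infinity>)
    else \<infinity>)"

definition exp2 :: "ereal \<Rightarrow> ereal" where
  "exp2 x = (case x of ereal t \<Rightarrow> ereal (2 powr t) | PInfty \<Rightarrow> \<infinity> | MInfty \<Rightarrow> 0)"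

definition DTV :: "'a measure \<Rightarrow> 'a measure \<Rightarrow> real" where
  "DTV Q' Q = (SUP B\<in>sets Q. \<bar>measure Q' B - measure Q B\<bar>)"

end

theory Submission
  imports Defs
begin

text \<open>
  By Tonelli, \<open>W\<^sub>P(h) = E\<^sub>P[min(r, h)]\<close>, so \<open>S\<^sub>P(h) = E\<^sub>P[(r - h)\<^sup>+] = Q(B) - h P(B)\<close> for
  \<open>B = {r > h}\<close>; in particular \<open>S\<^sub>P\<close> is continuous and strictly decreasing up to \<open>\<parallel>r\<parallel>\<^sub>\<infinity>\<close>.
  If \<open>t = exp\<^sub>2 D\<^sub>\<infinity>(Q'\<parallel>P)\<close> is finite then \<open>Q'(B) \<le> t P(B)\<close> for every \<open>B\<close>, hence for \<open>B = {r > t}\<close>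
  \<open>S\<^sub>P(t) = Q(B) - t P(B) \<le> Q(B) - Q'(B) \<le> D\<^sub>T\<^sub>V(Q', Q) \<le> \<epsilon> = S\<^sub>P(S\<^sub>P\<^sup>-\<^sup>1(\<epsilon>))\<close>,
  and monotonicity of \<open>S\<^sub>P\<close> gives \<open>S\<^sub>P\<^sup>-\<^sup>1(\<epsilon>) \<le> t\<close>.
\<close>

lemma esssup_ge_const:
  assumes "emeasure M (space M) \<noteq> 0" and "\<And>x. c \<le> f x"
  shows "c \<le> esssup M f"
proof -
  have "esssup M (\<lambda>x. c) \<le> esssup M f"
    using assms(2) by (intro esssup_mono) auto
  then show ?thesis
    by (simp add: esssup_const[OF assms(1)])
qed

lemma wP_antimono:
  assumes "prob_space P" and "r \<in> borel_measurable P" and "x \<le> y"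
  shows "wP P r y \<le> wP P r x"
  unfolding wP_def using assms
  by (intro finite_measure.finite_measure_mono prob_space.finite_measure) auto

lemma borel_measurable_wP:
  assumes "prob_space P" and "r \<in> borel_measurable P"
  shows "wP P r \<in> borel_measurable borel"
proof -
  have "mono (\<lambda>h. - wP P r h)"
    using wP_antimono[OF assms] by (auto simp: mono_def)
  then have "(\<lambda>h. - (- wP P r h)) \<in> borel_measurable borel"
    by (intro borel_measurable_uminus borel_measurable_mono)
  then show ?thesis
    by simp
qed

lemma wP_nonneg: "0 \<le> wP P r h"
  by (simp add: wP_def)

lemma wP_le_1: "prob_space P \<Longrightarrow> wP P r h \<le> 1"
  by (simp add: wP_def prob_space.prob_le_1)

lemma nn_integral_wP_eq_nn_integral_min:
  assumes "prob_space P" and r[measurable]: "r \<in> borel_measurable P"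
    and r_nonneg: "\<And>x. x \<in> space P \<Longrightarrow> 0 \<le> r x" and "0 \<le> M"
  shows "(\<integral>\<^sup>+\<eta>. ennreal (indicator {0..M} \<eta> * wP P r \<eta>) \<partial>lborel) = (\<integral>\<^sup>+x. ennreal (min (r x) M) \<partial>P)"
proof -
  interpret prob_space P by fact
  interpret pair_sigma_finite P lborel ..
  define f where "f x \<eta> = (if 0 \<le> \<eta> \<and> \<eta> \<le> M \<and> \<eta> \<le> r x then 1 else 0 :: ennreal)" for x \<eta>
  have [measurable]: "case_prod f \<in> borel_measurable (P \<Otimes>\<^sub>M lborel)"
    unfolding f_def by measurable
  have "ennreal (indicator {0..M} \<eta> * wP P r \<eta>) = (\<integral>\<^sup>+x. f x \<eta> \<partial>P)" for \<eta>
  proof -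
    have "(\<integral>\<^sup>+x. f x \<eta> \<partial>P) = (\<integral>\<^sup>+x. indicator {0..M} \<eta> * indicator {x \<in> space P. \<eta> \<le> r x} x \<partial>P)"
      unfolding f_def by (intro nn_integral_cong) (auto simp: indicator_def)
    also have "\<dots> = indicator {0..M} \<eta> * emeasure P {x \<in> space P. \<eta> \<le> r x}"
      by (subst nn_integral_cmult) auto
    finally have "(\<integral>\<^sup>+x. f x \<eta> \<partial>P) = indicator {0..M} \<eta> * emeasure P {x \<in> space P. \<eta> \<le> r x}" .
    then show ?thesis
      by (simp add: wP_def emeasure_eq_measure indicator_def)
  qed
  then have "(\<integral>\<^sup>+\<eta>. ennreal (indicator {0..M} \<eta> * wP P r \<eta>) \<partial>lborel) = (\<integral>\<^sup>+x. (\<integral>\<^sup>+\<eta>. f x \<eta> \<partial>lborel) \<partial>P)"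
    by (simp add: Fubini')
  also have "\<dots> = (\<integral>\<^sup>+x. ennreal (min (r x) M) \<partial>P)"
  proof (intro nn_integral_cong)
    fix x assume "x \<in> space P"
    then have "(\<integral>\<^sup>+\<eta>. f x \<eta> \<partial>lborel) = (\<integral>\<^sup>+\<eta>. indicator {0..min (r x) M} \<eta> \<partial>lborel)"
      unfolding f_def by (intro nn_integral_cong) (auto simp: indicator_def)
    with r_nonneg \<open>x \<in> space P\<close> \<open>0 \<le> M\<close> show "(\<integral>\<^sup>+\<eta>. f x \<eta> \<partial>lborel) = ennreal (min (r x) M)"
      by simp
  qed
  finally show ?thesis .
qed

lemma WP_eq_integral_min:
  assumes P: "prob_space P" and r[measurable]: "r \<in> borel_measurable P"
    and r_nonneg: "\<And>x. x \<in> space P \<Longrightarrow> 0 \<le> r x" and M: "0 \<le> M"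
  shows "WP P r M = (\<integral>x. min (r x) M \<partial>P)"
proof -
  interpret prob_space P by fact
  have [measurable]: "wP P r \<in> borel_measurable borel"
    by (rule borel_measurable_wP[OF P r])
  have WP_eq: "WP P r M = (\<integral>\<eta>. indicator {0..M} \<eta> * wP P r \<eta> \<partial>lborel)"
    unfolding WP_def using M interval_integral_Icc[of 0 M "wP P r"]
    by (simp add: zero_ereal_def set_lebesgue_integral_def)
  have "integrable lborel (\<lambda>\<eta>. indicator {0..M} \<eta> * wP P r \<eta>)"
  proof (rule Bochner_Integration.integrable_bound)
    show "integrable lborel (\<lambda>\<eta>. indicator {0..M} \<eta> :: real)"
      using M by (intro integrable_real_indicator) auto
    show "AE \<eta> in lborel. norm (indicator {0..M} \<eta> * wP P r \<eta>) \<le> norm (indicator {0..M} \<eta> :: real)"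
      using wP_le_1[OF P] by (auto simp: indicator_def wP_nonneg)
  qed measurable
  then have "ennreal (WP P r M) = (\<integral>\<^sup>+\<eta>. ennreal (indicator {0..M} \<eta> * wP P r \<eta>) \<partial>lborel)"
    unfolding WP_eq by (intro nn_integral_eq_integral[symmetric] AE_I2) (auto simp: wP_nonneg)
  also have "\<dots> = (\<integral>\<^sup>+x. ennreal (min (r x) M) \<partial>P)"
    by (rule nn_integral_wP_eq_nn_integral_min[OF P r r_nonneg M])
  also have "\<dots> = ennreal (\<integral>x. min (r x) M \<partial>P)"
    using r_nonneg M by (intro nn_integral_eq_integral integrable_const_bound[where B=M]) auto
  finally show ?thesis
    using r_nonneg M by (subst (asm) ennreal_inj) (auto simp: WP_eq wP_nonneg intro!: integral_nonneg_AE)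
qed

locale prob_density = prob_space P for P :: "'a measure" +
  fixes r :: "'a \<Rightarrow> real"
  assumes borel_measurable_r[measurable]: "r \<in> borel_measurable P"
    and r_nonneg: "\<And>x. 0 \<le> r x"
    and integrable_r: "integrable P r"
    and integral_r: "integral\<^sup>L P r = 1"
begin

lemma integrable_min_r: "integrable P (\<lambda>x. min (r x) M)" if "0 \<le> M"
  using r_nonneg that by (intro integrable_const_bound[where B=M]) auto

lemma SP_eq_integral: "SP P r M = (\<integral>x. r x - min (r x) M \<partial>P)" if "0 \<le> M"
  using integrable_min_r[OF that] integrable_r integral_r
  by (simp add: SP_def WP_eq_integral_min[OF prob_space_axioms borel_measurable_r] r_nonneg that)

lemma SP_diff: "SP P r a - SP P r b = (\<integral>x. min (r x) b - min (r x) a \<partial>P)"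
  if "0 \<le> a" "0 \<le> b"
  using that integrable_min_r[of a] integrable_min_r[of b]
  by (simp add: SP_def WP_eq_integral_min[OF prob_space_axioms borel_measurable_r] r_nonneg)

lemma SP_lipschitz: "\<bar>SP P r a - SP P r b\<bar> \<le> \<bar>a - b\<bar>" if "0 \<le> a" "0 \<le> b"
proof -
  have int: "integrable P (\<lambda>x. min (r x) b - min (r x) a)"
    using integrable_min_r that by auto
  have "(\<integral>x. min (r x) b - min (r x) a \<partial>P) \<le> (\<integral>x. \<bar>a - b\<bar> \<partial>P)"
    by (rule integral_mono[OF int]) auto
  moreover have "(\<integral>x. - \<bar>a - b\<bar> \<partial>P) \<le> (\<integral>x. min (r x) b - min (r x) a \<partial>P)"
    by (rule integral_mono[OF _ int]) auto
  ultimately show ?thesis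
    using SP_diff[OF that] by (simp add: prob_space)
qed

lemma continuous_on_SP: "continuous_on {0..b} (SP P r)"
proof (rule lipschitz_on_continuous_on[where L=1], rule lipschitz_onI)
  fix x y assume "x \<in> {0..b}" "y \<in> {0..b}"
  then show "dist (SP P r x) (SP P r y) \<le> 1 * dist x y"
    using SP_lipschitz[of x y] by (simp add: dist_real_def)
qed simp

lemma SP_0: "SP P r 0 = 1"
  using SP_eq_integral[of 0] integral_r r_nonneg by (simp add: min_absorb2)

lemma rsup_nonneg: "0 \<le> rsup P r"
  unfolding rsup_def zero_ereal_def using r_nonneg
  by (intro esssup_ge_const) (auto simp: emeasure_space_1)

lemma SP_strict_antimono:
  assumes "0 \<le> a" and "a < b" and "ereal b \<le> rsup P r"
  shows "SP P r b < SP P r a"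
proof -
  have int: "integrable P (\<lambda>x. min (r x) b - min (r x) a)"
    using integrable_min_r assms by auto
  have nonneg: "AE x in P. 0 \<le> min (r x) b - min (r x) a"
    using assms by auto
  have "(\<integral>x. min (r x) b - min (r x) a \<partial>P) \<noteq> 0"
  proof
    assume "(\<integral>x. min (r x) b - min (r x) a \<partial>P) = 0"
    then have "AE x in P. min (r x) b - min (r x) a = 0"
      using integral_nonneg_eq_0_iff_AE[OF int nonneg] by simp
    then have "AE x in P. ereal (r x) \<le> ereal a"
      by eventually_elim (use assms in \<open>auto simp: min_def split: if_splits\<close>)
    then have "rsup P r \<le> ereal a"
      unfolding rsup_def by (intro esssup_I) auto
    from order_trans[OF assms(3) this] assms(2) show False
      by simp
  qed
  moreover have "0 \<le> (\<integral>x. min (r x) b - min (r x) a \<partial>P)"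
    by (rule integral_nonneg_AE[OF nonneg])
  ultimately show ?thesis
    using SP_diff[of a b] assms by linarith
qed

lemma SP_real_tendsto_0: "(\<lambda>n. SP P r (real n)) \<longlonglongrightarrow> 0"
proof -
  have "(\<lambda>n. \<integral>x. r x - min (r x) (real n) \<partial>P) \<longlonglongrightarrow> (\<integral>x. 0 \<partial>P)"
  proof (rule integral_dominated_convergence[where w=r])
    show "AE x in P. (\<lambda>n. r x - min (r x) (real n)) \<longlonglongrightarrow> 0"
    proof (rule AE_I2)
      fix x
      have "\<forall>\<^sub>F n in sequentially. r x - min (r x) (real n) = 0"
        using eventually_ge_at_top[of "nat \<lceil>r x\<rceil>"]
        by eventually_elim (auto simp: min_def dest!: nat_ceiling_le_eq[THEN iffD1])
      then show "(\<lambda>n. r x - min (r x) (real n)) \<longlonglongrightarrow> 0"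
        by (rule tendsto_eventually)
    qed
  qed (use r_nonneg integrable_r in auto)
  then show ?thesis
    by (simp add: SP_eq_integral)
qed

lemma SP_eq_0: "SP P r R = 0" if "0 \<le> R" and "rsup P r \<le> ereal R"
proof -
  have "AE x in P. ereal (r x) \<le> rsup P r"
    unfolding rsup_def by (rule esssup_AE)
  then have "AE x in P. ereal (r x) \<le> ereal R"
    by eventually_elim (rule order_trans[OF _ that(2)])
  then have "AE x in P. r x - min (r x) R = 0"
    by eventually_elim auto
  then show ?thesis
    using that by (simp add: SP_eq_integral integral_eq_zero_AE)
qed

lemma ex_SP_le: "\<exists>b\<ge>0. ereal b \<le> rsup P r \<and> SP P r b \<le> e" if e: "0 < e"
proof -
  obtain n where n: "SP P r (real n) < e"
    using order_tendstoD(2)[OF SP_real_tendsto_0 e] by (auto simp: eventually_sequentially)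
  show ?thesis
  proof (cases "ereal (real n) \<le> rsup P r")
    case True
    with n show ?thesis
      by (intro exI[of _ "real n"]) auto
  next
    case False
    then obtain R where "rsup P r = ereal R"
      using rsup_nonneg by (cases "rsup P r") auto
    with rsup_nonneg SP_eq_0[of R] e show ?thesis
      by (intro exI[of _ R]) auto
  qed
qed

lemma SP_surj: "\<exists>h\<ge>0. ereal h \<le> rsup P r \<and> SP P r h = e" if e: "0 < e" "e \<le> 1"
proof -
  obtain b where b: "0 \<le> b" "ereal b \<le> rsup P r" "SP P r b \<le> e"
    using ex_SP_le[OF e(1)] by blast
  then obtain h where "0 \<le> h" "h \<le> b" "SP P r h = e"
    using IVT2'[of "SP P r" b e 0] e SP_0 continuous_on_SP[of b] by auto
  with b show ?thesis
    using order_trans[of "ereal h" "ereal b" "rsup P r"] by (intro exI[of _ h]) auto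
qed

lemma SP_inv_eq: "SP_inv P r e = h" if "0 \<le> h" and "ereal h \<le> rsup P r" and "SP P r h = e"
  unfolding SP_inv_def
proof (rule the_equality)
  fix h' assume h': "0 \<le> h' \<and> ereal h' \<le> rsup P r \<and> SP P r h' = e"
  show "h' = h"
    using SP_strict_antimono[of h h'] SP_strict_antimono[of h' h] h' that
    by (cases h h' rule: linorder_cases) auto
qed (use that in auto)

lemma SP_inv_le:
  assumes "0 < e" and "e \<le> 1" and "0 \<le> t" and "SP P r t \<le> e"
  shows "SP_inv P r e \<le> t"
proof -
  obtain h where h: "0 \<le> h" "ereal h \<le> rsup P r" "SP P r h = e"
    using SP_surj[OF assms(1,2)] by blast
  have "h \<le> t"
    using SP_strict_antimono[of t h] h assms by force
  with SP_inv_eq[OF h] show ?thesis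
    by simp
qed

lemma SP_eq_excess_mass:
  assumes "0 \<le> t"
  shows "SP P r t = measure (density P r) {x \<in> space P. t < r x} - t * measure P {x \<in> space P. t < r x}"
proof -
  define B where "B = {x \<in> space P. t < r x}"
  have [measurable]: "B \<in> sets P"
    unfolding B_def by measurable
  have "measure (density P r) B = (\<integral>x. indicator B x \<partial>density P r)"
    by simp
  also have "\<dots> = (\<integral>x. indicator B x * r x \<partial>P)"
    by (subst integral_density) (auto simp: r_nonneg mult.commute)
  finally have QB: "measure (density P r) B = (\<integral>x. indicator B x * r x \<partial>P)" .
  have "SP P r t = (\<integral>x. indicator B x * r x - t * indicator B x \<partial>P)"
    unfolding SP_eq_integral[OF assms] by (rule Bochner_Integration.integral_cong) (auto simp: B_def indicator_def)
  also have "\<dots> = measure (density P r) B - t * measure P B"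
    using integrable_mult_indicator[of B P r] integrable_r
    by (subst Bochner_Integration.integral_diff) (auto simp: QB emeasure_eq_measure)
  finally show ?thesis
    unfolding B_def .
qed

end

lemma density_rdens:
  assumes "sigma_finite_measure P" and "sigma_finite_measure Q"
    and "absolutely_continuous P Q" and "sets Q = sets P"
  shows "density P (rdens P Q) = Q"
proof -
  have "density P (rdens P Q) = density P (RN_deriv P Q)"
    unfolding rdens_def
  proof (rule density_cong)
    show "AE x in P. ennreal (enn2real (RN_deriv P Q x)) = RN_deriv P Q x"
      using sigma_finite_measure.RN_deriv_finite[OF assms] by eventually_elim (simp add: less_top)
  qed measurable
  also have "\<dots> = Q"
    using sigma_finite_measure.density_RN_deriv[OF assms(1,3,4)] .
  finally show ?thesis .
qed

lemma prob_density_rdens: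
  assumes "prob_space P" and "prob_space Q" and "absolutely_continuous P Q" and "sets Q = sets P"
  shows "prob_density P (rdens P Q)"
proof -
  interpret P: prob_space P by fact
  interpret Q: prob_space Q by fact
  have Q_eq: "density P (rdens P Q) = Q"
    using assms by (intro density_rdens) unfold_locales
  have "(\<integral>\<^sup>+x. ennreal (rdens P Q x) \<partial>P) = emeasure (density P (rdens P Q)) (space P)"
    by (simp add: emeasure_density rdens_def)
  also have "\<dots> = ennreal 1"
    using Q_eq Q.emeasure_space_1 sets_eq_imp_space_eq[OF assms(4)] by simp
  finally have "integrable P (rdens P Q) \<and> integral\<^sup>L P (rdens P Q) = 1"
    using nn_integral_eq_integrable[of "rdens P Q" P 1] by (simp add: rdens_def)
  then show ?thesis
    by unfold_locales (auto simp: rdens_def)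
qed

lemma exp2_nonneg: "0 \<le> exp2 x"
  by (cases x) (auto simp: exp2_def)

lemma AE_RN_deriv_le_exp2_Dinf:
  assumes "prob_space P" and "exp2 (Dinf Q' P) = ereal t"
  shows "absolutely_continuous P Q'" and "AE x in P. RN_deriv P Q' x \<le> ennreal t"
proof -
  interpret prob_space P by fact
  show ac: "absolutely_continuous P Q'"
    using assms(2) by (rule contrapos_pp) (simp add: Dinf_def exp2_def)
  define E where "E = esssup P (\<lambda>x. enn2ereal (RN_deriv P Q' x))"
  have "0 \<le> E"
    unfolding E_def by (intro esssup_ge_const) (auto simp: emeasure_space_1)
  with assms(2) ac obtain s where E: "E = ereal s" and "0 \<le> s" and t: "t = 2 powr log 2 s"
    by (cases E) (auto simp: Dinf_def exp2_def E_def)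
  \<comment> \<open>\<open>log 2 0 = 0\<close>, so \<open>s \<le> t\<close> holds also for \<open>s = 0\<close>\<close>
  then have "s \<le> t"
    by (cases "s = 0") auto
  have "AE x in P. enn2ereal (RN_deriv P Q' x) \<le> E"
    unfolding E_def by (rule esssup_AE)
  then show "AE x in P. RN_deriv P Q' x \<le> ennreal t"
    by eventually_elim (use E \<open>0 \<le> s\<close> \<open>s \<le> t\<close> in \<open>auto simp: less_eq_ennreal.rep_eq intro: order_trans\<close>)
qed

lemma measure_le_exp2_Dinf:
  assumes "prob_space P" and "prob_space Q'" and "sets Q' = sets P"
    and "exp2 (Dinf Q' P) = ereal t" and A: "A \<in> sets P"
  shows "measure Q' A \<le> t * measure P A"
proof -
  interpret P: prob_space P by fact
  interpret Q': prob_space Q' by fact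
  have "0 \<le> t"
    using exp2_nonneg[of "Dinf Q' P"] assms(4) by simp
  have "emeasure Q' A = (\<integral>\<^sup>+x. RN_deriv P Q' x * indicator A x \<partial>P)"
    using P.density_RN_deriv[OF AE_RN_deriv_le_exp2_Dinf(1)[OF assms(1,4)] assms(3)] A
    by (metis emeasure_density borel_measurable_RN_deriv)
  also have "\<dots> \<le> (\<integral>\<^sup>+x. ennreal t * indicator A x \<partial>P)"
    using AE_RN_deriv_le_exp2_Dinf(2)[OF assms(1,4)]
    by (intro nn_integral_mono_AE) (auto elim!: eventually_mono simp: indicator_def)
  also have "\<dots> = ennreal (t * measure P A)"
    using A \<open>0 \<le> t\<close> by (simp add: nn_integral_cmult P.emeasure_eq_measure ennreal_mult)
  finally show ?thesis
    using \<open>0 \<le> t\<close> by (simp add: Q'.emeasure_eq_measure ennreal_le_iff)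
qed

lemma measure_diff_le_DTV:
  assumes "prob_space Q" and "prob_space Q'" and "B \<in> sets Q"
  shows "\<bar>measure Q' B - measure Q B\<bar> \<le> DTV Q' Q"
  unfolding DTV_def
proof (rule cSUP_upper[OF assms(3)])
  have "\<bar>measure Q' A - measure Q A\<bar> \<le> 1" for A
    using prob_space.prob_le_1[OF assms(1), of A] prob_space.prob_le_1[OF assms(2), of A]
      measure_nonneg[of Q A] measure_nonneg[of Q' A] by linarith
  then show "bdd_above ((\<lambda>B. \<bar>measure Q' B - measure Q B\<bar>) ` sets Q)"
    by (intro bdd_aboveI[where M=1]) auto
qed

theorem lemma1:
  fixes P Q Q' :: "'a::polish_space measure" and \<epsilon> :: real
  assumes "prob_space P" and "prob_space Q" and "prob_space Q'"
    and "sets P = sets borel" and "sets Q = sets borel" and "sets Q' = sets borel"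
    and "absolutely_continuous P Q"
    and "0 < \<epsilon>" and "\<epsilon> \<le> 1"
    and "DTV Q' Q \<le> \<epsilon>"
  shows "exp2 (Dinf Q' P) \<ge> ereal (SP_inv P (rdens P Q) \<epsilon>)"
proof -
  have sets_Q: "sets Q = sets P" and sets_Q': "sets Q' = sets P"
    using assms(4-6) by auto
  define r where "r = rdens P Q"
  interpret prob_density P r
    unfolding r_def using prob_density_rdens[OF assms(1,2,7) sets_Q] .
  have Q_eq: "density P r = Q"
    unfolding r_def using assms(1,2,7) sets_Q
    by (intro density_rdens) (auto intro: prob_space_imp_sigma_finite)
  show ?thesis
  proof (cases "exp2 (Dinf Q' P)")
    case (real t)
    define B where "B = {x \<in> space P. t < r x}"
    have "B \<in> sets P"
      unfolding B_def by measurable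
    have "0 \<le> t"
      using exp2_nonneg[of "Dinf Q' P"] real by simp
    then have "SP P r t = measure Q B - t * measure P B"
      unfolding B_def Q_eq[symmetric] by (rule SP_eq_excess_mass)
    also have "\<dots> \<le> \<bar>measure Q' B - measure Q B\<bar>"
      using measure_le_exp2_Dinf[OF assms(1,3) sets_Q' real \<open>B \<in> sets P\<close>] by simp
    also have "\<dots> \<le> \<epsilon>"
      using measure_diff_le_DTV[OF assms(2,3)] \<open>B \<in> sets P\<close> sets_Q assms(10) by fastforce
    finally show ?thesis
      using SP_inv_le[OF assms(8,9) \<open>0 \<le> t\<close>] real by (simp add: r_def)
  qed (use exp2_nonneg[of "Dinf Q' P"] in auto)
qed

end
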